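(* Let $\triangle ABC$ be an obtuse triangle circumscribed about an ellipse with semi-axes $a>b>0$ whose center coincides with the circumcenter of $\triangle ABC$. Then the radius of the polar circle of $\triangle ABC$ equals $\sqrt{2ab}$. Equivalently, the area of the polar circle is twice the area of the ellipse.
   Context: A triangle is circumscribed about a conic if each of its three sidelines is tangent to the conic. For an obtuse triangle $ABC$ with orthocenter $H$, let $H_A$ be the foot of the perpendicular from $A$ to line $BC$. The polar circle of $\triangle ABC$ is the circle with center $H$ and radius $r_p$ with $r_p^2=|AH|\,|HH_A|$. This value does not depend on the chosen vertex. *)

theory Defs
  imports "HOL-Analysis.Analysis"
begin

definition sideline :: "real^2 \<Rightarrow> real^2 \<Rightarrow> (real^2) set" where
  "sideline P Q = {(1 - t) *\<^sub>R P + t *\<^sub>R Q | t. True}"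

text \<open>Ellipse with center Oc, unit orthogonal axis directions u, v and semi-axes a, b
  (along u and v respectively).\<close>
definition ellipse :: "real^2 \<Rightarrow> real^2 \<Rightarrow> real^2 \<Rightarrow> real \<Rightarrow> real \<Rightarrow> (real^2) set" where
  "ellipse Oc u v a b = {p. ((p - Oc) \<bullet> u)\<^sup>2 / a\<^sup>2 + ((p - Oc) \<bullet> v)\<^sup>2 / b\<^sup>2 = 1}"

definition tangent_line :: "(real^2) set \<Rightarrow> (real^2) set \<Rightarrow> bool" where
  "tangent_line L E \<longleftrightarrow> (\<exists>!p. p \<in> L \<and> p \<in> E)"

definition circumscribed_about :: "real^2 \<Rightarrow> real^2 \<Rightarrow> real^2 \<Rightarrow> (real^2) set \<Rightarrow> bool" where
  "circumscribed_about A B C E \<longleftrightarrow>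
     tangent_line (sideline B C) E \<and> tangent_line (sideline C A) E \<and> tangent_line (sideline A B) E"

definition obtuse_triangle :: "real^2 \<Rightarrow> real^2 \<Rightarrow> real^2 \<Rightarrow> bool" where
  "obtuse_triangle A B C \<longleftrightarrow> \<not> collinear {A, B, C} \<and>
     ((B - A) \<bullet> (C - A) < 0 \<or> (A - B) \<bullet> (C - B) < 0 \<or> (A - C) \<bullet> (B - C) < 0)"

definition is_circumcenter :: "real^2 \<Rightarrow> real^2 \<Rightarrow> real^2 \<Rightarrow> real^2 \<Rightarrow> bool" where
  "is_circumcenter Oc A B C \<longleftrightarrow> dist Oc A = dist Oc B \<and> dist Oc B = dist Oc C"

definition is_orthocenter :: "real^2 \<Rightarrow> real^2 \<Rightarrow> real^2 \<Rightarrow> real^2 \<Rightarrow> bool" where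
  "is_orthocenter H A B C \<longleftrightarrow>
     (H - A) \<bullet> (C - B) = 0 \<and> (H - B) \<bullet> (A - C) = 0 \<and> (H - C) \<bullet> (B - A) = 0"

definition is_foot :: "real^2 \<Rightarrow> real^2 \<Rightarrow> real^2 \<Rightarrow> real^2 \<Rightarrow> bool" where
  "is_foot F A B C \<longleftrightarrow> F \<in> sideline B C \<and> (A - F) \<bullet> (C - B) = 0"

end

theory Submission
  imports Defs "HOL-Library.Quadratic_Discriminant"
begin

(* Put the circumcentre O at the origin and read the vertices as complex numbers w1, w2, w3 of
   modulus R, in coordinates along the axes of the ellipse x^2/a^2 + y^2/b^2 = 1. For two points
   of the circle, tangency of their chord to the ellipse is a relation that is symmetric in the
   pair. Eliminating the conjugates R^2/w_i from the three relations gives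
   w1 w2 + w2 w3 + w3 w1 = b^2 - a^2, 2 (a^2 + b^2) R^2 = (b^2 - a^2)^2 + R^4 and
   R^2 |w1 + w2 + w3|^2 = (b^2 - a^2)^2, whence |R^2 - |w1 + w2 + w3|^2| = 4ab.
   By Sylvester's formula w1 + w2 + w3 is the orthocentre H, and AH * HH_A is half the absolute
   power of H with respect to the circumcircle, i.e. 2ab. *)

lemma inner_real2: "(x::real^2) \<bullet> y = x $ 1 * y $ 1 + x $ 2 * y $ 2"
  by (simp add: inner_vec_def sum_2)

lemma inner_orthonormal_frame:
  fixes u v p q :: "real^2"
  assumes "norm u = 1" "norm v = 1" "u \<bullet> v = 0"
  shows "p \<bullet> q = (p \<bullet> u) * (q \<bullet> u) + (p \<bullet> v) * (q \<bullet> v)"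
proof -
  have "(u $ 1)\<^sup>2 + (u $ 2)\<^sup>2 = 1" "(v $ 1)\<^sup>2 + (v $ 2)\<^sup>2 = 1" "u $ 1 * v $ 1 + u $ 2 * v $ 2 = 0"
    using assms by (simp_all add: norm_eq_1 inner_real2 power2_eq_square)
  \<comment> \<open>the rows of an orthogonal matrix are orthonormal as well\<close>
  then have "(u $ 1)\<^sup>2 + (v $ 1)\<^sup>2 = 1" "(u $ 2)\<^sup>2 + (v $ 2)\<^sup>2 = 1" "u $ 1 * u $ 2 + v $ 1 * v $ 2 = 0"
    by algebra+
  then show ?thesis
    unfolding inner_real2 by algebra
qed

definition frame_coord :: "real^2 \<Rightarrow> real^2 \<Rightarrow> real^2 \<Rightarrow> complex" where
  "frame_coord u v p = Complex (p \<bullet> u) (p \<bullet> v)"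

lemma Re_frame_coord [simp]: "Re (frame_coord u v p) = p \<bullet> u"
  and Im_frame_coord [simp]: "Im (frame_coord u v p) = p \<bullet> v"
  by (simp_all add: frame_coord_def)

lemma frame_coord_add: "frame_coord u v (p + q) = frame_coord u v p + frame_coord u v q"
  and frame_coord_diff: "frame_coord u v (p - q) = frame_coord u v p - frame_coord u v q"
  by (simp_all add: frame_coord_def complex_eq_iff inner_add_left inner_diff_left)

lemma norm_frame_coord:
  assumes "norm u = 1" "norm v = 1" "u \<bullet> v = 0"
  shows "cmod (frame_coord u v p) = norm p"
  using inner_orthonormal_frame[OF assms, of p p]
  unfolding frame_coord_def complex_norm norm_eq_sqrt_inner[of p] by (simp add: power2_eq_square)

lemma discrim_eq_0_if_unique_root:
  fixes a b c :: real
  assumes "a \<noteq> 0" and "\<exists>!x. a * x\<^sup>2 + b * x + c = 0"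
  shows "discrim a b c = 0"
  using discriminant_negative[OF assms(1)] discriminant_pos_ex[OF assms(1)] assms(2)
  by (metis linorder_neqE_linordered_idom)

lemma tangent_sideline_unique_parameter:
  fixes P Q :: "real^2"
  assumes "P \<noteq> Q" and "tangent_line (sideline P Q) E"
  shows "\<exists>!t. (1 - t) *\<^sub>R P + t *\<^sub>R Q \<in> E"
proof -
  from assms(2) obtain p where p: "p \<in> sideline P Q" "p \<in> E"
    and uniq: "\<And>p'. p' \<in> sideline P Q \<Longrightarrow> p' \<in> E \<Longrightarrow> p' = p"
    unfolding tangent_line_def by blast
  from p(1) obtain t where t: "p = (1 - t) *\<^sub>R P + t *\<^sub>R Q"
    unfolding sideline_def by blast
  show ?thesis
  proof
    show "(1 - t) *\<^sub>R P + t *\<^sub>R Q \<in> E" using p(2) t by simp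
  next
    fix s assume "(1 - s) *\<^sub>R P + s *\<^sub>R Q \<in> E"
    then have "(1 - s) *\<^sub>R P + s *\<^sub>R Q = (1 - t) *\<^sub>R P + t *\<^sub>R Q"
      using uniq t unfolding sideline_def by blast
    then have "(s - t) *\<^sub>R (Q - P) = 0" by (simp add: algebra_simps)
    then show "s = t" using assms(1) by simp
  qed
qed

lemma tangent_sideline_ellipse:
  fixes P Q Oc u v :: "real^2" and a b :: real
  assumes ab: "a > 0" "b > 0" and uv: "norm u = 1" "norm v = 1" "u \<bullet> v = 0"
    and "P \<noteq> Q" and "tangent_line (sideline P Q) (ellipse Oc u v a b)"
  defines "w \<equiv> frame_coord u v (P - Oc)" and "z \<equiv> frame_coord u v (Q - Oc)"
  shows "a\<^sup>2 * (Im w - Im z)\<^sup>2 + b\<^sup>2 * (Re w - Re z)\<^sup>2 = (Re w * Im z - Im w * Re z)\<^sup>2"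
proof -
  define d where "d = z - w"
  define \<alpha> where "\<alpha> = b\<^sup>2 * (Re d)\<^sup>2 + a\<^sup>2 * (Im d)\<^sup>2"
  define \<beta> where "\<beta> = b\<^sup>2 * Re w * Re d + a\<^sup>2 * Im w * Im d"
  define \<gamma> where "\<gamma> = b\<^sup>2 * (Re w)\<^sup>2 + a\<^sup>2 * (Im w)\<^sup>2 - a\<^sup>2 * b\<^sup>2"
  have on_ellipse: "(1 - t) *\<^sub>R P + t *\<^sub>R Q \<in> ellipse Oc u v a b \<longleftrightarrow> \<alpha> * t\<^sup>2 + 2 * \<beta> * t + \<gamma> = 0" for t
  proof -
    have "((1 - t) *\<^sub>R P + t *\<^sub>R Q - Oc) \<bullet> u = Re w + t * Re d"
      "((1 - t) *\<^sub>R P + t *\<^sub>R Q - Oc) \<bullet> v = Im w + t * Im d"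
      by (simp_all add: w_def z_def d_def inner_diff_left inner_add_left algebra_simps)
    then have "(1 - t) *\<^sub>R P + t *\<^sub>R Q \<in> ellipse Oc u v a b \<longleftrightarrow>
        (Re w + t * Re d)\<^sup>2 / a\<^sup>2 + (Im w + t * Im d)\<^sup>2 / b\<^sup>2 = 1"
      unfolding ellipse_def by simp
    also have "\<dots> \<longleftrightarrow> \<alpha> * t\<^sup>2 + 2 * \<beta> * t + \<gamma> = 0"
      using ab by (simp add: \<alpha>_def \<beta>_def \<gamma>_def field_simps power2_eq_square) (auto simp: algebra_simps)
    finally show ?thesis .
  qed
  have "d \<noteq> 0"
    using \<open>P \<noteq> Q\<close> norm_frame_coord[OF uv, of "Q - P"] by (auto simp: d_def w_def z_def frame_coord_diff)
  then have "\<alpha> \<noteq> 0"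
    using ab by (auto simp: \<alpha>_def complex_eq_iff add_nonneg_eq_0_iff)
  moreover have "\<exists>!t. \<alpha> * t\<^sup>2 + 2 * \<beta> * t + \<gamma> = 0"
    using tangent_sideline_unique_parameter[OF assms(6,7)] by (simp add: on_ellipse)
  ultimately have "discrim \<alpha> (2 * \<beta>) \<gamma> = 0"
    by (rule discrim_eq_0_if_unique_root)
  then have "\<beta>\<^sup>2 = \<alpha> * \<gamma>"
    by (simp add: discrim_def power_mult_distrib)
  moreover have "\<beta>\<^sup>2 - \<alpha> * \<gamma> = a\<^sup>2 * b\<^sup>2 * (\<alpha> - (Re w * Im d - Im w * Re d)\<^sup>2)"
    by (simp add: \<alpha>_def \<beta>_def \<gamma>_def power2_eq_square algebra_simps)
  ultimately have "\<alpha> = (Re w * Im d - Im w * Re d)\<^sup>2"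
    using ab by simp
  then show ?thesis
    by (simp add: \<alpha>_def d_def power2_eq_square algebra_simps)
qed

lemma tangent_chord_of_circle:
  fixes w z :: complex and X Y R :: real
  assumes "w * cnj w = of_real (R\<^sup>2)" and "z * cnj z = of_real (R\<^sup>2)" and "w \<noteq> z"
    and "X * (Im w - Im z)\<^sup>2 + Y * (Re w - Re z)\<^sup>2 = (Re w * Im z - Im w * Re z)\<^sup>2"
  shows "2 * of_real (X + Y) * of_real (R\<^sup>2) - of_real (Y - X) * (w * z + cnj w * cnj z)
       = of_real (R\<^sup>2) * (2 * of_real (R\<^sup>2) + w * cnj z + cnj w * z)"
proof -
  obtain x1 y1 x2 y2 where w: "w = Complex x1 y1" and z: "z = Complex x2 y2"
    by (meson complex.exhaust_sel)
  have circle: "x1\<^sup>2 + y1\<^sup>2 = R\<^sup>2" "x2\<^sup>2 + y2\<^sup>2 = R\<^sup>2"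
    using assms(1,2) unfolding complex_mult_cnj of_real_eq_iff w z by simp_all
  have id: "2 * R\<^sup>2 * (X * (y1 - y2)\<^sup>2 + Y * (x1 - x2)\<^sup>2 - (x1 * y2 - y1 * x2)\<^sup>2)
      = ((x1 - x2)\<^sup>2 + (y1 - y2)\<^sup>2)
        * ((X + Y) * R\<^sup>2 - (Y - X) * (x1 * x2 - y1 * y2) - R\<^sup>2 * (R\<^sup>2 + x1 * x2 + y1 * y2))"
    using circle by algebra
  have "(x1 - x2)\<^sup>2 + (y1 - y2)\<^sup>2 \<noteq> 0"
    using \<open>w \<noteq> z\<close> by (auto simp: w z add_nonneg_eq_0_iff)
  moreover have "((x1 - x2)\<^sup>2 + (y1 - y2)\<^sup>2)
      * ((X + Y) * R\<^sup>2 - (Y - X) * (x1 * x2 - y1 * y2) - R\<^sup>2 * (R\<^sup>2 + x1 * x2 + y1 * y2)) = 0"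
    using id assms(4) by (simp add: w z)
  ultimately have "(X + Y) * R\<^sup>2 - (Y - X) * (x1 * x2 - y1 * y2) = R\<^sup>2 * (R\<^sup>2 + x1 * x2 + y1 * y2)"
    by auto
  then show ?thesis
    by (simp add: w z complex_eq_iff algebra_simps)
qed

lemma chord_relation_eliminate_conjugates:
  fixes w1 w2 c1 c2 r S D :: "'a::idom"
  assumes "w1 * c1 = r" "w2 * c2 = r"
    and "2 * S * r - D * (w1 * w2 + c1 * c2) = r * (2 * r + w1 * c2 + c1 * w2)"
  shows "D * (w1 * w2)\<^sup>2 + r\<^sup>2 * (w1 + w2)\<^sup>2 - 2 * S * r * w1 * w2 + D * r\<^sup>2 = 0"
proof -
  have "(2 * S * r - D * (w1 * w2 + c1 * c2) - r * (2 * r + w1 * c2 + c1 * w2)) * (w1 * w2) = 0"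
    using assms(3) by simp
  then show ?thesis
    using assms(1,2) by algebra
qed

lemma chord_relations_symmetric_functions:
  fixes w1 w2 w3 c1 c2 c3 r S D :: "'a::idom"
  assumes c: "w1 * c1 = r" "w2 * c2 = r" "w3 * c3 = r"
    and "w1 \<noteq> w2" "w2 \<noteq> w3" "w3 \<noteq> w1"
    and "2 * S * r - D * (w1 * w2 + c1 * c2) = r * (2 * r + w1 * c2 + c1 * w2)"
    and "2 * S * r - D * (w2 * w3 + c2 * c3) = r * (2 * r + w2 * c3 + c2 * w3)"
    and "2 * S * r - D * (w3 * w1 + c3 * c1) = r * (2 * r + w3 * c1 + c3 * w1)"
  shows "r\<^sup>2 * (w1 + w2 + w3) = D * (w1 * w2 * w3)"
    and "2 * S * r = D * (w1 * w2 + w2 * w3 + w3 * w1) + r\<^sup>2"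
proof -
  have F12: "D * (w1 * w2)\<^sup>2 + r\<^sup>2 * (w1 + w2)\<^sup>2 - 2 * S * r * w1 * w2 + D * r\<^sup>2 = 0"
    using chord_relation_eliminate_conjugates[OF c(1,2) assms(7)] .
  have F23: "D * (w2 * w3)\<^sup>2 + r\<^sup>2 * (w2 + w3)\<^sup>2 - 2 * S * r * w2 * w3 + D * r\<^sup>2 = 0"
    using chord_relation_eliminate_conjugates[OF c(2,3) assms(8)] .
  have F31: "D * (w3 * w1)\<^sup>2 + r\<^sup>2 * (w3 + w1)\<^sup>2 - 2 * S * r * w3 * w1 + D * r\<^sup>2 = 0"
    using chord_relation_eliminate_conjugates[OF c(3,1) assms(9)] .
  have "(w2 - w3) * (D * w1\<^sup>2 * (w2 + w3) + r\<^sup>2 * (2 * w1 + w2 + w3) - 2 * S * r * w1) = 0"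
    using F12 F31 by algebra
  then have L1: "D * w1\<^sup>2 * (w2 + w3) + r\<^sup>2 * (2 * w1 + w2 + w3) - 2 * S * r * w1 = 0"
    using assms(5) by simp
  have "(w1 - w3) * (D * w2\<^sup>2 * (w1 + w3) + r\<^sup>2 * (2 * w2 + w1 + w3) - 2 * S * r * w2) = 0"
    using F12 F23 by algebra
  then have L2: "D * w2\<^sup>2 * (w1 + w3) + r\<^sup>2 * (2 * w2 + w1 + w3) - 2 * S * r * w2 = 0"
    using assms(6) by simp
  have "(w1 - w2) * (D * (w1 * w2 + w2 * w3 + w3 * w1) + r\<^sup>2 - 2 * S * r) = 0"
    using L1 L2 by algebra
  then have M: "D * (w1 * w2 + w2 * w3 + w3 * w1) + r\<^sup>2 - 2 * S * r = 0"
    using assms(4) by simp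
  then show "2 * S * r = D * (w1 * w2 + w2 * w3 + w3 * w1) + r\<^sup>2"
    by (simp add: algebra_simps)
  show "r\<^sup>2 * (w1 + w2 + w3) = D * (w1 * w2 * w3)"
    using L1 M by algebra
qed

lemma chord_relations_conjugate_pair:
  fixes w1 w2 w3 c1 c2 c3 r S D :: "'a::field"
  assumes c: "w1 * c1 = r" "w2 * c2 = r" "w3 * c3 = r" and "r \<noteq> 0"
    and w: "w1 \<noteq> w2" "w2 \<noteq> w3" "w3 \<noteq> w1"
    and E: "2 * S * r - D * (w1 * w2 + c1 * c2) = r * (2 * r + w1 * c2 + c1 * w2)"
      "2 * S * r - D * (w2 * w3 + c2 * c3) = r * (2 * r + w2 * c3 + c2 * w3)"
      "2 * S * r - D * (w3 * w1 + c3 * c1) = r * (2 * r + w3 * c1 + c3 * w1)"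
  shows "w1 * w2 + w2 * w3 + w3 * w1 = D"
    and "2 * S * r = D\<^sup>2 + r\<^sup>2"
    and "r * ((w1 + w2 + w3) * (c1 + c2 + c3)) = D\<^sup>2"
proof -
  have c': "c1 * w1 = r" "c2 * w2 = r" "c3 * w3 = r"
    using c by (simp_all add: mult.commute)
  have "c1 \<noteq> c2" "c2 \<noteq> c3" "c3 \<noteq> c1"
    using c w \<open>r \<noteq> 0\<close> by (metis mult_cancel_right mult_zero_right)+
  \<comment> \<open>the relations are invariant under exchanging the w's with the c's\<close>
  moreover have "2 * S * r - D * (c1 * c2 + w1 * w2) = r * (2 * r + c1 * w2 + w1 * c2)"
    "2 * S * r - D * (c2 * c3 + w2 * w3) = r * (2 * r + c2 * w3 + w2 * c3)"
    "2 * S * r - D * (c3 * c1 + w3 * w1) = r * (2 * r + c3 * w1 + w3 * c1)"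
    using E by (simp_all add: algebra_simps)
  ultimately have conj: "r\<^sup>2 * (c1 + c2 + c3) = D * (c1 * c2 * c3)"
    using chord_relations_symmetric_functions(1)[OF c'] by blast
  note sym = chord_relations_symmetric_functions[OF c w E]
  have "(c1 + c2 + c3) * (w1 * w2 * w3) = (w1 * c1) * (w2 * w3) + (w2 * c2) * (w3 * w1) + (w3 * c3) * (w1 * w2)"
    by (simp add: algebra_simps)
  also have "\<dots> = r * (w1 * w2 + w2 * w3 + w3 * w1)"
    by (simp only: c) (simp add: algebra_simps)
  finally have e1c_e3w: "(c1 + c2 + c3) * (w1 * w2 * w3) = r * (w1 * w2 + w2 * w3 + w3 * w1)" .
  have "(c1 * c2 * c3) * (w1 * w2 * w3) = (w1 * c1) * (w2 * c2) * (w3 * c3)"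
    by (simp add: ac_simps)
  also have "\<dots> = r ^ 3"
    by (simp only: c power3_eq_cube)
  finally have e3c_e3w: "(c1 * c2 * c3) * (w1 * w2 * w3) = r ^ 3" .
  have "r ^ 3 * (w1 * w2 + w2 * w3 + w3 * w1) = r\<^sup>2 * ((c1 + c2 + c3) * (w1 * w2 * w3))"
    by (simp only: e1c_e3w) (simp add: power2_eq_square power3_eq_cube)
  also have "\<dots> = D * ((c1 * c2 * c3) * (w1 * w2 * w3))"
    by (metis conj mult.assoc)
  also have "\<dots> = r ^ 3 * D"
    by (subst e3c_e3w) (rule mult.commute)
  finally show e2: "w1 * w2 + w2 * w3 + w3 * w1 = D"
    using \<open>r \<noteq> 0\<close> by simp
  show "2 * S * r = D\<^sup>2 + r\<^sup>2"
    using sym(2) by (simp add: e2 power2_eq_square)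
  have "r ^ 3 * (r * ((w1 + w2 + w3) * (c1 + c2 + c3)))
      = (r\<^sup>2 * (w1 + w2 + w3)) * (r\<^sup>2 * (c1 + c2 + c3))"
    by (simp add: power2_eq_square power3_eq_cube ac_simps)
  also have "\<dots> = D\<^sup>2 * ((c1 * c2 * c3) * (w1 * w2 * w3))"
    unfolding conj sym(1) by (simp add: power2_eq_square ac_simps)
  also have "\<dots> = r ^ 3 * D\<^sup>2"
    by (subst e3c_e3w) (rule mult.commute)
  finally show "r * ((w1 + w2 + w3) * (c1 + c2 + c3)) = D\<^sup>2"
    using \<open>r \<noteq> 0\<close> by simp
qed

lemma concyclic_chord_relations_invariants:
  fixes w1 w2 w3 :: complex and \<rho> S D :: real
  assumes "w1 * cnj w1 = of_real \<rho>" "w2 * cnj w2 = of_real \<rho>" "w3 * cnj w3 = of_real \<rho>"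
    and "\<rho> \<noteq> 0" and "w1 \<noteq> w2" "w2 \<noteq> w3" "w3 \<noteq> w1"
    and "2 * of_real S * of_real \<rho> - of_real D * (w1 * w2 + cnj w1 * cnj w2)
       = of_real \<rho> * (2 * of_real \<rho> + w1 * cnj w2 + cnj w1 * w2)"
    and "2 * of_real S * of_real \<rho> - of_real D * (w2 * w3 + cnj w2 * cnj w3)
       = of_real \<rho> * (2 * of_real \<rho> + w2 * cnj w3 + cnj w2 * w3)"
    and "2 * of_real S * of_real \<rho> - of_real D * (w3 * w1 + cnj w3 * cnj w1)
       = of_real \<rho> * (2 * of_real \<rho> + w3 * cnj w1 + cnj w3 * w1)"
  shows "2 * S * \<rho> = D\<^sup>2 + \<rho>\<^sup>2" and "\<rho> * (cmod (w1 + w2 + w3))\<^sup>2 = D\<^sup>2"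
proof -
  note inv = chord_relations_conjugate_pair[OF assms(1-3) _ assms(5-10)]
  have "complex_of_real (2 * S * \<rho>) = of_real (D\<^sup>2 + \<rho>\<^sup>2)"
    using inv(2) \<open>\<rho> \<noteq> 0\<close> by simp
  then show "2 * S * \<rho> = D\<^sup>2 + \<rho>\<^sup>2"
    by (simp only: of_real_eq_iff)
  have "complex_of_real (\<rho> * (cmod (w1 + w2 + w3))\<^sup>2) = of_real \<rho> * ((w1 + w2 + w3) * cnj (w1 + w2 + w3))"
    by (simp only: of_real_mult complex_norm_square)
  also have "\<dots> = of_real (D\<^sup>2)"
    using inv(3) \<open>\<rho> \<noteq> 0\<close> by simp
  finally show "\<rho> * (cmod (w1 + w2 + w3))\<^sup>2 = D\<^sup>2"
    by (simp only: of_real_eq_iff)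
qed

lemma abs_power_eq_of_chord_invariants:
  fixes a b R h :: real
  assumes "a > 0" "b > 0" "R \<noteq> 0"
    and S: "2 * (a\<^sup>2 + b\<^sup>2) * R\<^sup>2 = (b\<^sup>2 - a\<^sup>2)\<^sup>2 + (R\<^sup>2)\<^sup>2"
    and D: "R\<^sup>2 * h = (b\<^sup>2 - a\<^sup>2)\<^sup>2"
  shows "\<bar>h - R\<^sup>2\<bar> = 4 * a * b"
proof -
  have "(R\<^sup>2)\<^sup>2 * (4 * a * b)\<^sup>2 = (2 * (a\<^sup>2 + b\<^sup>2) * R\<^sup>2)\<^sup>2 - 4 * (R\<^sup>2)\<^sup>2 * ((b\<^sup>2 - a\<^sup>2)\<^sup>2)"
    by algebra
  also have "\<dots> = ((b\<^sup>2 - a\<^sup>2)\<^sup>2 - (R\<^sup>2)\<^sup>2)\<^sup>2"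
    unfolding S by algebra
  also have "\<dots> = (R\<^sup>2)\<^sup>2 * (h - R\<^sup>2)\<^sup>2"
    unfolding D[symmetric] by algebra
  finally have "(4 * a * b)\<^sup>2 = (h - R\<^sup>2)\<^sup>2"
    using \<open>R \<noteq> 0\<close> by simp
  then have "\<bar>4 * a * b\<bar> = \<bar>h - R\<^sup>2\<bar>"
    by (metis real_sqrt_abs)
  then show ?thesis
    using assms(1,2) by simp
qed

lemma concentric_inellipse_sylvester_power:
  fixes A B C Oc u v :: "real^2" and a b :: real
  assumes ab: "a > 0" "b > 0" and uv: "norm u = 1" "norm v = 1" "u \<bullet> v = 0"
    and nc: "\<not> collinear {A, B, C}" and circ: "is_circumcenter Oc A B C"
    and tangent: "circumscribed_about A B C (ellipse Oc u v a b)"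
  shows "\<bar>(norm ((A - Oc) + (B - Oc) + (C - Oc)))\<^sup>2 - (dist Oc A)\<^sup>2\<bar> = 4 * a * b"
proof -
  define R where "R = dist Oc A"
  define w where "w P = frame_coord u v (P - Oc)" for P
  have distinct: "A \<noteq> B" "B \<noteq> C" "C \<noteq> A"
    using nc by (auto simp: insert_commute)
  have w_inj: "w P \<noteq> w Q" if "P \<noteq> Q" for P Q
    using that norm_frame_coord[OF uv, of "P - Q"] by (auto simp: w_def frame_coord_diff)
  have circle: "w P * cnj (w P) = of_real (R\<^sup>2)" if "P \<in> {A, B, C}" for P
  proof -
    have "norm (P - Oc) = R"
      using circ that by (auto simp: is_circumcenter_def R_def dist_norm norm_minus_commute)
    then show ?thesis
      using norm_frame_coord[OF uv, of "P - Oc"] complex_norm_square[of "w P"] by (simp add: w_def)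
  qed
  have chord: "2 * of_real (a\<^sup>2 + b\<^sup>2) * of_real (R\<^sup>2) - of_real (b\<^sup>2 - a\<^sup>2) * (w P * w Q + cnj (w P) * cnj (w Q))
      = of_real (R\<^sup>2) * (2 * of_real (R\<^sup>2) + w P * cnj (w Q) + cnj (w P) * w Q)"
    if "P \<in> {A, B, C}" "Q \<in> {A, B, C}" "P \<noteq> Q" "tangent_line (sideline P Q) (ellipse Oc u v a b)" for P Q
  proof -
    have "a\<^sup>2 * (Im (w P) - Im (w Q))\<^sup>2 + b\<^sup>2 * (Re (w P) - Re (w Q))\<^sup>2
        = (Re (w P) * Im (w Q) - Im (w P) * Re (w Q))\<^sup>2"
      using tangent_sideline_ellipse[OF ab uv that(3,4)] by (simp add: w_def)
    from tangent_chord_of_circle[OF circle[OF that(1)] circle[OF that(2)] w_inj[OF that(3)] this]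
    show ?thesis by simp
  qed
  have "R \<noteq> 0"
    using distinct(1) circ by (auto simp: R_def is_circumcenter_def)
  have "2 * (a\<^sup>2 + b\<^sup>2) * R\<^sup>2 = (b\<^sup>2 - a\<^sup>2)\<^sup>2 + (R\<^sup>2)\<^sup>2"
    and "R\<^sup>2 * (cmod (w A + w B + w C))\<^sup>2 = (b\<^sup>2 - a\<^sup>2)\<^sup>2"
    using concyclic_chord_relations_invariants[OF circle circle circle _ w_inj w_inj w_inj chord chord chord]
      tangent distinct \<open>R \<noteq> 0\<close> by (auto simp: circumscribed_about_def)
  moreover have "cmod (w A + w B + w C) = norm ((A - Oc) + (B - Oc) + (C - Oc))"
    by (simp only: w_def norm_frame_coord[OF uv] flip: frame_coord_add)
  ultimately show ?thesis
    using abs_power_eq_of_chord_invariants[OF ab \<open>R \<noteq> 0\<close>] by (simp add: R_def)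
qed

lemma collinear_orthogonal_to_same:
  fixes d p q :: "real^2"
  assumes "d \<noteq> 0" "p \<bullet> d = 0" "q \<bullet> d = 0"
  shows "collinear {0, p, q}"
proof -
  have cross: "p $ 1 * q $ 2 = p $ 2 * q $ 1"
  proof -
    have "d $ 1 \<noteq> 0 \<or> d $ 2 \<noteq> 0" using assms(1) by (simp add: vec_eq_iff forall_2)
    moreover have "d $ 1 * (p $ 1 * q $ 2 - p $ 2 * q $ 1) = 0" "d $ 2 * (p $ 1 * q $ 2 - p $ 2 * q $ 1) = 0"
      using assms(2,3) unfolding inner_real2 by algebra+
    ultimately show ?thesis by auto
  qed
  show ?thesis
  proof (cases "p $ 1 = 0")
    case True
    then have "q = (q $ 2 / p $ 2) *\<^sub>R p \<or> p = 0" using cross by (auto simp: vec_eq_iff forall_2)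
    then show ?thesis unfolding collinear_lemma by blast
  next
    case False
    then have "q = (q $ 1 / p $ 1) *\<^sub>R p" using cross by (auto simp: vec_eq_iff forall_2 field_simps)
    then show ?thesis unfolding collinear_lemma by blast
  qed
qed

lemma orthogonal_two_sides_eq_0:
  fixes A B C z :: "real^2"
  assumes "\<not> collinear {A, B, C}" and "z \<bullet> (A - B) = 0" and "z \<bullet> (C - B) = 0"
  shows "z = 0"
proof (rule ccontr)
  assume "z \<noteq> 0"
  then have "collinear {0, A - B, C - B}"
    using collinear_orthogonal_to_same[of z "A - B" "C - B"] assms(2,3) by (simp add: inner_commute)
  then have "collinear {A, B, C}"
    using collinear_3[of A B C] by simp
  with assms(1) show False ..
qed

lemma inner_add_diff_eq_0_of_norm_eq:
  fixes p q :: "'a::real_inner"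
  assumes "norm p = norm q"
  shows "(p + q) \<bullet> (p - q) = 0"
proof -
  have "p \<bullet> p = q \<bullet> q"
    using assms by (simp add: dot_square_norm)
  then show ?thesis
    unfolding inner_add_left inner_diff_right by (simp add: inner_commute)
qed

lemma orthocenter_eq_sylvester:
  fixes A B C H Oc :: "real^2"
  assumes "\<not> collinear {A, B, C}" and "is_circumcenter Oc A B C" and "is_orthocenter H A B C"
  shows "H - Oc = (A - Oc) + (B - Oc) + (C - Oc)"
proof -
  define K where "K = Oc + (A - Oc) + (B - Oc) + (C - Oc)"
  have radii: "norm (A - Oc) = norm (B - Oc)" "norm (C - Oc) = norm (B - Oc)"
    using assms(2) by (auto simp: is_circumcenter_def dist_norm norm_minus_commute)
  have "K - C = (A - Oc) + (B - Oc)" "A - B = (A - Oc) - (B - Oc)"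
    "K - A = (C - Oc) + (B - Oc)" "C - B = (C - Oc) - (B - Oc)"
    by (simp_all add: K_def algebra_simps)
  then have "(K - C) \<bullet> (A - B) = 0" "(K - A) \<bullet> (C - B) = 0"
    using inner_add_diff_eq_0_of_norm_eq[OF radii(1)] inner_add_diff_eq_0_of_norm_eq[OF radii(2)]
    by (simp_all only:)
  moreover have "(H - C) \<bullet> (A - B) = 0" "(H - A) \<bullet> (C - B) = 0"
    using assms(3) unfolding is_orthocenter_def by (metis inner_minus_right minus_diff_eq neg_equal_0_iff_equal)+
  moreover have "(H - K) \<bullet> d = (H - X) \<bullet> d - (K - X) \<bullet> d" for X d
    by (simp add: inner_diff_left)
  ultimately have "(H - K) \<bullet> (A - B) = 0" "(H - K) \<bullet> (C - B) = 0"
    by (metis diff_self)+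
  then have "H - K = 0"
    by (rule orthogonal_two_sides_eq_0[OF assms(1)])
  then show ?thesis
    by (simp add: K_def algebra_simps)
qed

lemma orthocenter_distance_product:
  fixes A B C H HA Oc :: "real^2"
  assumes nc: "\<not> collinear {A, B, C}" and circ: "is_circumcenter Oc A B C"
    and orth: "is_orthocenter H A B C" and foot: "is_foot HA A B C"
  shows "dist A H * dist H HA = \<bar>(dist Oc A)\<^sup>2 - (dist Oc H)\<^sup>2\<bar> / 2"
proof -
  define a' b' c' where "a' = A - Oc" and "b' = B - Oc" and "c' = C - Oc"
  have radii: "a' \<bullet> a' = (dist Oc A)\<^sup>2" "b' \<bullet> b' = (dist Oc A)\<^sup>2" "c' \<bullet> c' = (dist Oc A)\<^sup>2"
    using circ by (auto simp: is_circumcenter_def a'_def b'_def c'_def dist_norm norm_minus_commute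
        dot_square_norm)
  have H: "H = a' + b' + c' + Oc"
    using orthocenter_eq_sylvester[OF nc circ orth] unfolding a'_def b'_def c'_def
    by (metis diff_add_cancel)
  obtain t where t: "HA = (1 - t) *\<^sub>R B + t *\<^sub>R C"
    using foot by (auto simp: is_foot_def sideline_def)
  have "C - B \<noteq> 0"
    using nc by auto
  moreover have altitude: "(A - H) \<bullet> (C - B) = 0"
    using orth unfolding is_orthocenter_def by (metis inner_minus_left minus_diff_eq neg_equal_0_iff_equal)
  moreover have "(H - HA) \<bullet> (C - B) = 0"
  proof -
    have "H - HA = - (A - H) + (A - HA)" by simp
    then show ?thesis
      using altitude foot by (simp only: inner_add_left inner_minus_left is_foot_def)
  qed
  ultimately have "collinear {0, A - H, H - HA}"
    by (rule collinear_orthogonal_to_same)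
  then have "dist A H * dist H HA = \<bar>(A - H) \<bullet> (H - HA)\<bar>"
    by (metis dist_norm norm_cauchy_schwarz_equal)
  also have "(A - H) \<bullet> (H - HA) = (A - H) \<bullet> (H - B)"
  proof -
    have "H - HA = (H - B) - t *\<^sub>R (C - B)" by (simp add: t algebra_simps)
    then have "(A - H) \<bullet> (H - HA) = (A - H) \<bullet> (H - B) - t * ((A - H) \<bullet> (C - B))"
      by (simp only: inner_diff_right inner_scaleR_right)
    then show ?thesis
      using altitude by simp
  qed
  also have "(A - H) \<bullet> (H - B) = - ((b' + c') \<bullet> (a' + c'))"
  proof -
    have "A - H = - (b' + c')" "H - B = a' + c'"
      by (simp_all add: H a'_def b'_def c'_def algebra_simps)
    then show ?thesis by (simp only: inner_minus_left)
  qed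
  also have "\<dots> = ((dist Oc A)\<^sup>2 - (a' + b' + c') \<bullet> (a' + b' + c')) / 2"
    using radii by (simp add: inner_add_left inner_add_right inner_commute)
  also have "(a' + b' + c') \<bullet> (a' + b' + c') = (dist Oc H)\<^sup>2"
  proof -
    have "dist Oc H = norm (H - Oc)"
      by (simp add: dist_norm norm_minus_commute)
    also have "H - Oc = a' + b' + c'"
      by (simp add: H)
    finally show ?thesis
      by (simp add: dot_square_norm)
  qed
  finally show ?thesis
    by simp
qed

theorem corollary5p16:
  fixes A B C Oc H HA u v :: "real^2" and a b :: real
  assumes "obtuse_triangle A B C"
    and "a > b" and "b > 0"
    and "norm u = 1" and "norm v = 1" and "u \<bullet> v = 0"
    and "is_circumcenter Oc A B C"
    and "circumscribed_about A B C (ellipse Oc u v a b)"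
    and "is_orthocenter H A B C"
    and "is_foot HA A B C"
  shows "sqrt (dist A H * dist H HA) = sqrt (2 * a * b)
         \<and> pi * (sqrt (dist A H * dist H HA))\<^sup>2 = 2 * (pi * a * b)"
proof -
  \<comment> \<open>of obtuseness only the non-collinearity of the vertices is needed\<close>
  have nc: "\<not> collinear {A, B, C}"
    using assms(1) by (simp add: obtuse_triangle_def)
  have "dist Oc H = norm (H - Oc)"
    by (simp add: dist_norm norm_minus_commute)
  also have "H - Oc = (A - Oc) + (B - Oc) + (C - Oc)"
    by (rule orthocenter_eq_sylvester[OF nc assms(7,9)])
  finally have "dist A H * dist H HA = 2 * a * b"
    using orthocenter_distance_product[OF nc assms(7,9,10)]
      concentric_inellipse_sylvester_power[OF _ assms(3-6) nc assms(7,8)] assms(2,3)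
    by (simp add: abs_minus_commute)
  then show ?thesis
    using assms(2,3) by simp
qed

end
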